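(* Fix $0<d<1$ and let $c(x)=x^d$. For common slot instances, the price of anarchy of the coordination mechanism described in the context is $\Theta(1)$; that is, there is a constant $K_d$ depending only on $d$ such that for every common slot instance with cost function $c$ and every Nash equilibrium $(s,\xi)$ of the mechanism, $C(s)\le K_d\cdot\min_{s^*}C(s^* )$.
   Context: A game consists of a cost function $c$ (here $c(x)=x^d$, $c(0)=0$), slots $t=1,\dots,T$, and a set of jobs, each job $j$ having integer release time $r_j$ and deadline $d_j$ with $0<r_j<d_j<T$. A common slot instance is one in which some slot lies in $[r_j,d_j)$ for every job $j$ (equivalently, an optimal assignment uses a single slot). An assignment $s$ gives each job a slot $s_j$ with $r_j\le s_j<d_j$; the load is $l_t(s)=|\{j:s_j=t\}|$ and $C(s)=\sum_{t=1}^T c(l_t(s))$; the minimum is over all assignments. In the coordination mechanism, each job $j$ chooses a pair $(s_j,\xi_j)$ with $s_j\in[r_j,d_j)$ and payment $\xi_j\ge0$. Slot $t$ is opened iff $\sum_{j:s_j=t}\xi_j\ge c(l_t(s))$; a job whose slot is not opened has infinite cost, otherwise its cost is $\xi_j$. A profile $(s,\xi)$ is a Nash equilibrium if for every job $j$: (i) $\sum_{j':s_{j'}=s_j}\xi_{j'}\ge c(l_{s_j}(s))$; (ii) for every $t\in[r_j,d_j)\setminus\{s_j\}$, $\xi_j\le\max\{0,\,c(l_t(s)+1)-\sum_{j':s_{j'}=t}\xi_{j'}\}$; (iii) $\xi_j\le\max\{0,\,c(l_{s_j}(s))-\sum_{j':s_{j'}=s_j,\,j'\ne j}\xi_{j'}\}$.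 *)

theory Defs
  imports Complex_Main
begin

definition cst :: "real \<Rightarrow> nat \<Rightarrow> real" where
  "cst d x = (real x) powr d"   \<comment> \<open>c(x) = x^d, with c(0) = 0\<close>

definition valid_instance :: "nat \<Rightarrow> nat set \<Rightarrow> (nat \<Rightarrow> nat) \<Rightarrow> (nat \<Rightarrow> nat) \<Rightarrow> bool" where
  "valid_instance T J r dl \<longleftrightarrow> finite J \<and> (\<forall>j\<in>J. 0 < r j \<and> r j < dl j \<and> dl j < T)"

definition common_slot :: "nat set \<Rightarrow> (nat \<Rightarrow> nat) \<Rightarrow> (nat \<Rightarrow> nat) \<Rightarrow> bool" where
  "common_slot J r dl \<longleftrightarrow> (\<exists>t. \<forall>j\<in>J. r j \<le> t \<and> t < dl j)"

definition feasible :: "nat set \<Rightarrow> (nat \<Rightarrow> nat) \<Rightarrow> (nat \<Rightarrow> nat) \<Rightarrow> (nat \<Rightarrow> nat) \<Rightarrow> bool" where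
  "feasible J r dl s \<longleftrightarrow> (\<forall>j\<in>J. r j \<le> s j \<and> s j < dl j)"

definition load :: "nat set \<Rightarrow> (nat \<Rightarrow> nat) \<Rightarrow> nat \<Rightarrow> nat" where
  "load J s t = card {j\<in>J. s j = t}"

definition total_cost :: "real \<Rightarrow> nat \<Rightarrow> nat set \<Rightarrow> (nat \<Rightarrow> nat) \<Rightarrow> real" where
  "total_cost d T J s = (\<Sum>t=1..T. cst d (load J s t))"

definition paid :: "nat set \<Rightarrow> (nat \<Rightarrow> nat) \<Rightarrow> (nat \<Rightarrow> real) \<Rightarrow> nat \<Rightarrow> real" where
  "paid J s \<xi> t = (\<Sum>j\<in>{j\<in>J. s j = t}. \<xi> j)"

definition nash_eq :: "real \<Rightarrow> nat set \<Rightarrow> (nat \<Rightarrow> nat) \<Rightarrow> (nat \<Rightarrow> nat) \<Rightarrow> (nat \<Rightarrow> nat) \<Rightarrow> (nat \<Rightarrow> real) \<Rightarrow> bool" where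
  "nash_eq d J r dl s \<xi> \<longleftrightarrow> feasible J r dl s \<and> (\<forall>j\<in>J. \<xi> j \<ge> 0) \<and>
     (\<forall>j\<in>J.
        paid J s \<xi> (s j) \<ge> cst d (load J s (s j)) \<and>
        (\<forall>t. r j \<le> t \<and> t < dl j \<and> t \<noteq> s j \<longrightarrow>
              \<xi> j \<le> max 0 (cst d (load J s t + 1) - paid J s \<xi> t)) \<and>
        \<xi> j \<le> max 0 (cst d (load J s (s j)) - (\<Sum>j'\<in>{j'\<in>J. s j' = s j \<and> j' \<noteq> j}. \<xi> j')))"

end

theory Submission
  imports Defs "HOL-Analysis.Convex"
begin

text \<open>Every job at a slot a could move to any slot b in its window and pay only the
  marginal cost c(l_b + 1) - c(l_b) there, so the payments covering c(l_a) give
  l_a^d \<le> l_a ((l_b + 1)^d - l_b^d) \<le> d l_a l_b^(d-1), i.e. l_b^d \<le> \<rho> l_a^d with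
  \<rho> = d^(d/(1-d)) < 1. Since every window contains the common slot t0, a loaded slot
  dominates in this way every slot between itself and t0. Hence on each side of t0 the
  slot costs, read from the outside in, decay geometrically, and each side costs at most
  n^d / (1 - \<rho>) for n jobs. By subadditivity of x^d every assignment costs at least n^d.\<close>

lemma sum_le_bound_if_geometric_domination:
  fixes f :: "'a \<Rightarrow> real" and h :: "'a \<Rightarrow> 'b::linorder"
  assumes "finite S" and "inj_on h S" and "0 \<le> \<rho>" and "\<rho> < 1" and "0 \<le> B"
    and nonneg: "\<And>x. x \<in> S \<Longrightarrow> 0 \<le> f x" and bound: "\<And>x. x \<in> S \<Longrightarrow> f x \<le> B"
    and dom: "\<And>x y. x \<in> S \<Longrightarrow> y \<in> S \<Longrightarrow> h y < h x \<Longrightarrow> f x \<noteq> 0 \<Longrightarrow> f y \<le> \<rho> * f x"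
  shows "sum f S \<le> B / (1 - \<rho>)"
proof -
  have "\<forall>B. 0 \<le> B \<longrightarrow> (\<forall>y\<in>S'. f y \<le> B) \<longrightarrow> sum f S' \<le> B / (1 - \<rho>)" if "S' \<subseteq> S" for S'
    using finite_subset[OF that \<open>finite S\<close>] that
  proof (induction S' rule: finite_ranking_induct[where f = h])
    case empty
    then show ?case using \<open>\<rho> < 1\<close> by simp
  next
    case (insert x S')
    show ?case
    proof (intro allI impI)
      fix B :: real
      assume "0 \<le> B" and B: "\<forall>y\<in>insert x S'. f y \<le> B"
      show "sum f (insert x S') \<le> B / (1 - \<rho>)"
      proof (cases "x \<in> S' \<or> f x = 0")
        case True
        then have "sum f (insert x S') = sum f S'"
          by (metis add_0 insert_absorb sum.insert_if \<open>finite S'\<close>)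
        then show ?thesis using insert B \<open>0 \<le> B\<close> by simp
      next
        case False
        have "h y < h x" if "y \<in> S'" for y
          using insert.hyps(2)[OF that] inj_onD[OF \<open>inj_on h S\<close>, of x y] False that insert.prems
          by (metis insert_subset le_neq_trans subsetD)
        then have "\<forall>y\<in>S'. f y \<le> \<rho> * f x"
          using dom False insert.prems by blast
        moreover have "0 \<le> \<rho> * f x" using nonneg insert.prems \<open>0 \<le> \<rho>\<close> by simp
        ultimately have "sum f S' \<le> \<rho> * f x / (1 - \<rho>)"
          using insert.IH insert.prems by simp
        then have "sum f (insert x S') \<le> \<rho> * f x / (1 - \<rho>) + f x"
          using False insert.hyps(1) by simp
        also have "\<dots> = f x / (1 - \<rho>)" using \<open>\<rho> < 1\<close> by (simp add: field_simps)
        also have "\<dots> \<le> B / (1 - \<rho>)" using B \<open>\<rho> < 1\<close> by (simp add: divide_right_mono)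
        finally show ?thesis .
      qed
    qed
  qed
  then show ?thesis using \<open>0 \<le> B\<close> bound by blast
qed

lemma powr_sum_le_sum_powr:
  fixes x :: "'a \<Rightarrow> real"
  assumes "finite A" and "\<And>i. i \<in> A \<Longrightarrow> 0 \<le> x i" and "0 \<le> d" and "d \<le> 1"
  shows "(\<Sum>i\<in>A. x i) powr d \<le> (\<Sum>i\<in>A. x i powr d)"
proof (cases "(\<Sum>i\<in>A. x i) = 0")
  case True
  then show ?thesis using assms(2) by (simp add: sum_nonneg)
next
  case False
  define S where "S = (\<Sum>i\<in>A. x i)"
  have "0 \<le> S" unfolding S_def by (rule sum_nonneg) (rule assms(2))
  with False have "0 < S" unfolding S_def by linarith
  have weighted: "x i * S powr (d - 1) \<le> x i powr d" if "i \<in> A" for i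
  proof (cases "x i = 0")
    case False
    have "x i \<le> S" unfolding S_def using assms(1,2) that by (intro member_le_sum) auto
    then have "S powr (d - 1) \<le> x i powr (d - 1)"
      using False assms(2)[OF that] \<open>d \<le> 1\<close> by (intro powr_mono2') auto
    then have "x i * S powr (d - 1) \<le> x i * x i powr (d - 1)"
      using assms(2)[OF that] by (rule mult_left_mono)
    also have "\<dots> = x i powr d"
      using False assms(2)[OF that] by (simp add: powr_mult_base)
    finally show ?thesis .
  qed simp
  have "S powr d = S * S powr (d - 1)" using \<open>0 < S\<close> by (simp add: powr_mult_base)
  also have "\<dots> = (\<Sum>i\<in>A. x i * S powr (d - 1))" unfolding S_def by (simp add: sum_distrib_right)
  also have "\<dots> \<le> (\<Sum>i\<in>A. x i powr d)" by (rule sum_mono) (rule weighted)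
  finally show ?thesis unfolding S_def .
qed

lemma powr_succ_diff_le:
  fixes m d :: real
  assumes "0 \<le> d" and "d \<le> 1" and "0 < m"
  shows "(m + 1) powr d - m powr d \<le> d * m powr (d - 1)"
proof -
  have "(m + 1) powr d * m powr (1 - d) \<le> d * (m + 1) + (1 - d) * m"
    using Youngs_inequality_0[of d "1 - d" "m + 1" m] assms by simp
  moreover have "m powr (1 - d) = m / m powr d"
    using \<open>0 < m\<close> by (simp add: powr_diff)
  ultimately have "(m + 1) powr d * m \<le> (m + d) * m powr d"
    using \<open>0 < m\<close> by (simp add: field_simps)
  moreover have "m * m powr (d - 1) = m powr d"
    using \<open>0 < m\<close> by (simp add: powr_mult_base)
  ultimately have "m * ((m + 1) powr d - m powr d) \<le> m * (d * m powr (d - 1))"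
    by (simp add: algebra_simps)
  then show ?thesis
    using \<open>0 < m\<close> by simp
qed

lemma powr_le_if_le_marginal_powr:
  fixes d l m :: real
  assumes "0 < d" and "d < 1" and "0 < l" and "0 < m"
    and marginal: "l powr d \<le> l * ((m + 1) powr d - m powr d)"
  shows "m powr d \<le> d powr (d / (1 - d)) * l powr d"
proof -
  have "l * l powr (d - 1) = l powr d"
    using \<open>0 < l\<close> by (simp add: powr_mult_base)
  also have "\<dots> \<le> l * ((m + 1) powr d - m powr d)"
    by (rule marginal)
  also have "\<dots> \<le> l * (d * m powr (d - 1))"
    using powr_succ_diff_le[of d m] assms by (intro mult_left_mono) auto
  finally have "l powr (d - 1) \<le> d * m powr (d - 1)"
    using \<open>0 < l\<close> by simp
  then have "m powr (1 - d) \<le> d * l powr (1 - d)"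
    using assms by (simp add: powr_diff field_simps)
  then have "(m powr (1 - d)) powr (1 / (1 - d)) \<le> (d * l powr (1 - d)) powr (1 / (1 - d))"
    using assms by (intro powr_mono2) auto
  then have "m \<le> d powr (1 / (1 - d)) * l"
    using assms by (simp add: powr_powr powr_mult)
  then have "m powr d \<le> (d powr (1 / (1 - d)) * l) powr d"
    using assms by (intro powr_mono2) auto
  also have "\<dots> = d powr (d / (1 - d)) * l powr d"
    using assms by (simp add: powr_mult powr_powr)
  finally show ?thesis .
qed

lemma powr_div_one_minus_less_one: "0 < d \<Longrightarrow> d < 1 \<Longrightarrow> d powr (d / (1 - d)) < (1::real)"
  using powr_less_mono2[of "d / (1 - d)" d 1] by simp

lemma cst_mono: "0 \<le> d \<Longrightarrow> x \<le> y \<Longrightarrow> cst d x \<le> cst d y"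
  by (simp add: cst_def powr_mono2)

lemma load_le_card: "finite J \<Longrightarrow> load J s t \<le> card J"
  unfolding load_def by (rule card_mono) auto

lemma nash_eq_cst_load_le_paid:
  assumes "nash_eq d J r dl s \<xi>" and "finite J"
  shows "cst d (load J s t) \<le> paid J s \<xi> t"
proof (cases "\<exists>j\<in>J. s j = t")
  case True
  then show ?thesis using assms(1) unfolding nash_eq_def by blast
next
  case False
  then have "{j\<in>J. s j = t} = {}" by blast
  then show ?thesis unfolding load_def paid_def cst_def by (simp only:) simp
qed

lemma nash_eq_payment_le_marginal_cost:
  assumes ne: "nash_eq d J r dl s \<xi>" and "finite J" and "0 \<le> d"
    and "j \<in> J" and "r j \<le> t" and "t < dl j" and "t \<noteq> s j"
  shows "\<xi> j \<le> cst d (load J s t + 1) - cst d (load J s t)"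
proof -
  have "\<xi> j \<le> max 0 (cst d (load J s t + 1) - paid J s \<xi> t)"
    using ne assms(4-) unfolding nash_eq_def by blast
  moreover have "cst d (load J s t) \<le> paid J s \<xi> t"
    using ne \<open>finite J\<close> by (rule nash_eq_cst_load_le_paid)
  moreover have "cst d (load J s t) \<le> cst d (load J s t + 1)"
    using \<open>0 \<le> d\<close> by (simp add: cst_mono)
  ultimately show ?thesis by linarith
qed

lemma nash_eq_cst_load_le_marginal_cost:
  assumes ne: "nash_eq d J r dl s \<xi>" and "finite J" and "0 \<le> d" and "a \<noteq> b"
    and movable: "\<forall>j\<in>J. s j = a \<longrightarrow> r j \<le> b \<and> b < dl j"
  shows "cst d (load J s a) \<le> load J s a * (cst d (load J s b + 1) - cst d (load J s b))"
proof -
  have "cst d (load J s a) \<le> paid J s \<xi> a"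
    using ne \<open>finite J\<close> by (rule nash_eq_cst_load_le_paid)
  also have "\<dots> = (\<Sum>j\<in>{j\<in>J. s j = a}. \<xi> j)"
    unfolding paid_def ..
  also have "\<dots> \<le> (\<Sum>j\<in>{j\<in>J. s j = a}. cst d (load J s b + 1) - cst d (load J s b))"
    using nash_eq_payment_le_marginal_cost[OF ne \<open>finite J\<close> \<open>0 \<le> d\<close>] movable \<open>a \<noteq> b\<close>
    by (intro sum_mono) auto
  also have "\<dots> = load J s a * (cst d (load J s b + 1) - cst d (load J s b))"
    unfolding load_def by simp
  finally show ?thesis .
qed

lemma nash_eq_cst_load_dominated:
  assumes ne: "nash_eq d J r dl s \<xi>" and "finite J" and "0 < d" and "d < 1" and "a \<noteq> b"
    and movable: "\<forall>j\<in>J. s j = a \<longrightarrow> r j \<le> b \<and> b < dl j" and "0 < load J s a"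
  shows "cst d (load J s b) \<le> d powr (d / (1 - d)) * cst d (load J s a)"
proof (cases "load J s b = 0")
  case False
  have "cst d (load J s a) \<le> load J s a * (cst d (load J s b + 1) - cst d (load J s b))"
    using nash_eq_cst_load_le_marginal_cost[OF ne \<open>finite J\<close> _ \<open>a \<noteq> b\<close> movable] \<open>0 < d\<close>
    by simp
  then show ?thesis
    using powr_le_if_le_marginal_powr[of d "load J s a" "load J s b"] assms False
    by (simp add: cst_def add.commute)
qed (simp add: cst_def)

lemma nash_eq_cst_load_decays_from_common_slot:
  assumes ne: "nash_eq d J r dl s \<xi>" and "finite J" and "0 < d" and "d < 1"
    and common: "\<forall>j\<in>J. r j \<le> t0 \<and> t0 < dl j"
    and between: "a < b \<and> b \<le> t0 \<or> t0 \<le> b \<and> b < a" and "0 < load J s a"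
  shows "cst d (load J s b) \<le> d powr (d / (1 - d)) * cst d (load J s a)"
proof (rule nash_eq_cst_load_dominated[OF ne \<open>finite J\<close> \<open>0 < d\<close> \<open>d < 1\<close> _ _ \<open>0 < load J s a\<close>])
  show "a \<noteq> b" using between by auto
  have "\<forall>j\<in>J. r j \<le> s j \<and> s j < dl j"
    using ne unfolding nash_eq_def feasible_def by blast
  then show "\<forall>j\<in>J. s j = a \<longrightarrow> r j \<le> b \<and> b < dl j"
    using common between by force
qed

lemma nash_eq_total_cost_le_common_slot:
  assumes ne: "nash_eq d J r dl s \<xi>" and "finite J" and "0 < d" and "d < 1"
    and "common_slot J r dl"
  shows "total_cost d T J s \<le> 2 / (1 - d powr (d / (1 - d))) * cst d (card J)"
proof -
  define \<rho> where "\<rho> = d powr (d / (1 - d))"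
  define f where "f t = cst d (load J s t)" for t
  obtain t0 where common: "\<forall>j\<in>J. r j \<le> t0 \<and> t0 < dl j"
    using \<open>common_slot J r dl\<close> unfolding common_slot_def by blast
  have "\<rho> < 1"
    unfolding \<rho>_def using \<open>0 < d\<close> \<open>d < 1\<close> by (rule powr_div_one_minus_less_one)
  have "0 \<le> \<rho>" unfolding \<rho>_def by simp
  have f_nonneg: "0 \<le> f t" for t unfolding f_def cst_def by simp
  have f_le: "f t \<le> cst d (card J)" for t
    unfolding f_def using load_le_card[OF \<open>finite J\<close>] \<open>0 < d\<close> by (simp add: cst_mono)
  have decay: "f b \<le> \<rho> * f a" if "a < b \<and> b \<le> t0 \<or> t0 \<le> b \<and> b < a" and "f a \<noteq> 0" for a b
    using nash_eq_cst_load_decays_from_common_slot[OF ne \<open>finite J\<close> \<open>0 < d\<close> \<open>d < 1\<close> common that(1)]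
      that(2) unfolding f_def \<rho>_def by (simp add: cst_def)
  have left: "sum f {..t0} \<le> cst d (card J) / (1 - \<rho>)"
    by (rule sum_le_bound_if_geometric_domination[where h = "\<lambda>t. t0 - t"])
      (use \<open>0 \<le> \<rho>\<close> \<open>\<rho> < 1\<close> f_nonneg f_le in \<open>auto simp: inj_on_def cst_def intro!: decay\<close>)
  have right: "sum f {t0<..T} \<le> cst d (card J) / (1 - \<rho>)"
    by (rule sum_le_bound_if_geometric_domination[where h = id])
      (use \<open>0 \<le> \<rho>\<close> \<open>\<rho> < 1\<close> f_nonneg f_le decay in \<open>auto simp: cst_def\<close>)
  have "total_cost d T J s = sum f {1..T}"
    unfolding total_cost_def f_def ..
  also have "\<dots> \<le> sum f ({..t0} \<union> {t0<..T})"
    using f_nonneg by (intro sum_mono2) auto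
  also have "\<dots> = sum f {..t0} + sum f {t0<..T}"
    by (rule sum.union_disjoint) auto
  also have "\<dots> \<le> 2 / (1 - \<rho>) * cst d (card J)"
    using left right by simp
  finally show ?thesis unfolding \<rho>_def .
qed

lemma total_cost_ge_cst_card:
  assumes "finite J" and "s ` J \<subseteq> {1..T}" and "0 \<le> d" and "d \<le> 1"
  shows "cst d (card J) \<le> total_cost d T J s"
proof -
  have "card J = (\<Sum>t=1..T. load J s t)"
    unfolding load_def using sum.group[OF assms(1) _ assms(2), of "\<lambda>_. 1::nat"] by simp
  then have "cst d (card J) = (\<Sum>t=1..T. real (load J s t)) powr d"
    unfolding cst_def by simp
  also have "\<dots> \<le> (\<Sum>t=1..T. real (load J s t) powr d)"
    using assms by (intro powr_sum_le_sum_powr) auto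
  finally show ?thesis unfolding total_cost_def cst_def .
qed

theorem theorem5:
  fixes d :: real
  assumes "0 < d" and "d < 1"
  shows "\<exists>K::real. \<forall>T J r dl s \<xi>.
           valid_instance T J r dl \<and> common_slot J r dl \<and> nash_eq d J r dl s \<xi> \<longrightarrow>
           (\<forall>s'. feasible J r dl s' \<longrightarrow> total_cost d T J s \<le> K * total_cost d T J s')"
proof -
  define K where "K = 2 / (1 - d powr (d / (1 - d)))"
  have "0 \<le> K"
    unfolding K_def using powr_div_one_minus_less_one[OF assms] by simp
  have "total_cost d T J s \<le> K * total_cost d T J s'"
    if valid: "valid_instance T J r dl" and "common_slot J r dl" and ne: "nash_eq d J r dl s \<xi>"
      and "feasible J r dl s'"
    for T J r dl s \<xi> s'
  proof -
    have "finite J" using valid unfolding valid_instance_def by blast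
    have "s' ` J \<subseteq> {1..T}"
      using valid \<open>feasible J r dl s'\<close> unfolding valid_instance_def feasible_def by force
    have "total_cost d T J s \<le> K * cst d (card J)"
      unfolding K_def using nash_eq_total_cost_le_common_slot[OF ne \<open>finite J\<close> assms \<open>common_slot J r dl\<close>] .
    also have "\<dots> \<le> K * total_cost d T J s'"
      using total_cost_ge_cst_card[OF \<open>finite J\<close> \<open>s' ` J \<subseteq> {1..T}\<close>] assms \<open>0 \<le> K\<close>
      by (intro mult_left_mono) auto
    finally show ?thesis .
  qed
  then show ?thesis by blast
qed

end
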